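(* Consider the procurement setting below with an XOS valuation $v$. The randomized mechanism XOS-Main (described below) is budget feasible and (universally) truthful, and there is an absolute constant $C$ such that for every cost vector $c$ (with $c(i)\le B$ for all $i$), $v(\mathrm{OPT}(c))\le C\cdot \mathbb{E}[\text{value of the winning set of XOS-Main on } c]$, where agents bid truthfully. XOS-Main: with probability $\frac12$ run XOS-Random-Sample; with probability $\frac12$ pick an item $i\in\arg\max_{i\in A}v(\{i\})$ as the only winner and pay it $B$. XOS-Random-Sample (on bids $b$): (1) put each item independently with probability $\frac12$ into a set $T$; (2) compute an optimal solution $\mathrm{OPT}(T)$, i.e. a set maximizing $v(S)$ over $S\subseteq T$ with $b(S)\le B$; (3) set $t=\frac{v(\mathrm{OPT}(T))}{8B}$; (4) find $S^*\in\arg\max_{S\subseteq A\setminus T}\{v(S)-t\cdot b(S)\}$, ties broken by a fixed order; (5) find an additive function $f$ in the XOS representation of $v$ with $f(S^* )=v(S^* )$; (6) run AddM for the additive valuation $f$ on item set $S^*$ with budget $B$; (7) output the result of AddM. Winners are paid their threshold payments.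
   Context: Setting: a buyer with budget $B>0$ and a set $A$ of $n$ agents (items); agent $i$ has a private cost $c(i)\ge 0$ (assumed $\le B$). The valuation $v:2^A\to\mathbb{R}_{\ge0}$ is public, monotone, with $v(\emptyset)=0$; it is XOS: $v(S)=\max\{f_1(S),\dots,f_m(S)\}$ for nonnegative additive functions $f_j$ ($f_j(S)=\sum_{i\in S}f_j(i)$). $\mathrm{OPT}(c)$ is a set maximizing $v(S)$ subject to $c(S)=\sum_{i\in S}c(i)\le B$. A mechanism receives bids $b(i)$, selects winners $S$ and payments $p(i)$, with $p(i)=0$ for $i\notin S$ and $p(i)\ge b(i)$ for $i\in S$; an agent's utility is $p(i)-c(i)$ if it wins and $0$ otherwise. A deterministic mechanism is truthful if bidding $b(i)=c(i)$ is a dominant strategy for every agent; a randomized mechanism is (universally) truthful if it is a probability distribution over deterministic truthful mechanisms. It is budget feasible if $\sum_i p(i)\le B$ always. The threshold payment of a winner under a monotone allocation rule is the supremum of bids with which it would still win. AddM denotes a fixed universally truthful, budget feasible mechanism for additive valuations (from prior work) whose approximation ratio is at most $3$. *)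

theory Defs
  imports "HOL-Probability.Probability"
begin

text \<open>Agents have type 'a; the agent set A is a finite subset.
  A bid (or cost) profile is a function 'a => real.
  A deterministic mechanism maps a bid profile to (winners, payments).\<close>

type_synonym 'a mech = "('a \<Rightarrow> real) \<Rightarrow> 'a set \<times> ('a \<Rightarrow> real)"

definition xos :: "('a \<Rightarrow> real) set \<Rightarrow> 'a set \<Rightarrow> real" where
  "xos F S = Max ((\<lambda>f. sum f S) ` F)"

definition xos_rep :: "'a set \<Rightarrow> ('a \<Rightarrow> real) set \<Rightarrow> bool" where
  "xos_rep A F \<longleftrightarrow> finite F \<and> F \<noteq> {} \<and> (\<forall>f\<in>F. \<forall>i\<in>A. 0 \<le> f i)"

definition opt_val :: "('a set \<Rightarrow> real) \<Rightarrow> 'a set \<Rightarrow> ('a \<Rightarrow> real) \<Rightarrow> real \<Rightarrow> real" where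
  "opt_val v S b B = Max (v ` {X. X \<subseteq> S \<and> sum b X \<le> B})"

definition valid :: "'a set \<Rightarrow> real \<Rightarrow> ('a \<Rightarrow> real) \<Rightarrow> bool" where
  "valid S B b \<longleftrightarrow> (\<forall>i\<in>S. 0 \<le> b i \<and> b i \<le> B)"

definition utility :: "'a \<Rightarrow> real \<Rightarrow> 'a set \<times> ('a \<Rightarrow> real) \<Rightarrow> real" where
  "utility i ci out = (if i \<in> fst out then snd out i - ci else 0)"

definition is_mech :: "'a set \<Rightarrow> real \<Rightarrow> 'a mech \<Rightarrow> bool" where
  "is_mech S B M \<longleftrightarrow>
     (\<forall>b b'. (\<forall>j\<in>S. b j = b' j) \<longrightarrow> M b = M b') \<and>
     (\<forall>b. valid S B b \<longrightarrow>
        fst (M b) \<subseteq> S \<and> (\<forall>i. i \<notin> fst (M b) \<longrightarrow> snd (M b) i = 0) \<and>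
        (\<forall>i\<in>fst (M b). b i \<le> snd (M b) i))"

definition truthful :: "'a set \<Rightarrow> real \<Rightarrow> 'a mech \<Rightarrow> bool" where
  "truthful S B M \<longleftrightarrow>
     (\<forall>c b i. valid S B c \<longrightarrow> valid S B b \<longrightarrow> i \<in> S \<longrightarrow>
        utility i (c i) (M b) \<le> utility i (c i) (M (b(i := c i))))"

definition budget_feasible :: "'a set \<Rightarrow> real \<Rightarrow> 'a mech \<Rightarrow> bool" where
  "budget_feasible S B M \<longleftrightarrow> (\<forall>b. valid S B b \<longrightarrow> sum (snd (M b)) S \<le> B)"

definition univ_truthful_bf :: "'a set \<Rightarrow> real \<Rightarrow> 'a mech pmf \<Rightarrow> bool" where
  "univ_truthful_bf S B P \<longleftrightarrow>
     (\<forall>M\<in>set_pmf P. is_mech S B M \<and> truthful S B M \<and> budget_feasible S B M)"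

definition threshold :: "real \<Rightarrow> (('a \<Rightarrow> real) \<Rightarrow> 'a set) \<Rightarrow> ('a \<Rightarrow> real) \<Rightarrow> 'a \<Rightarrow> real" where
  "threshold B alloc b i = Sup {x. 0 \<le> x \<and> x \<le> B \<and> i \<in> alloc (b(i := x))}"

definition threshold_mech :: "real \<Rightarrow> (('a \<Rightarrow> real) \<Rightarrow> 'a set) \<Rightarrow> 'a mech" where
  "threshold_mech B alloc b =
     (alloc b, (\<lambda>i. if i \<in> alloc b then threshold B alloc b i else 0))"

text \<open>Argmax with ties broken by a fixed order (given by an injective rk on sets).\<close>
definition tb_argmax :: "('a set \<Rightarrow> nat) \<Rightarrow> 'a set set \<Rightarrow> ('a set \<Rightarrow> real) \<Rightarrow> 'a set" where
  "tb_argmax rk D g =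
     (THE S. S \<in> D \<and> (\<forall>S'\<in>D. g S' \<le> g S) \<and> (\<forall>S'\<in>D. g S' = g S \<longrightarrow> rk S \<le> rk S'))"

text \<open>Allocation rule of XOS-Random-Sample for a fixed sample T and a fixed random seed w
  of AddM. addm w S f B is the deterministic mechanism AddM runs for seed w,
  on item set S with additive valuation f and budget B.
  sel S is the additive function of the XOS representation chosen in step (5).\<close>
definition rs_alloc ::
  "'a set \<Rightarrow> real \<Rightarrow> ('a \<Rightarrow> real) set \<Rightarrow> ('a set \<Rightarrow> ('a \<Rightarrow> real)) \<Rightarrow> ('a set \<Rightarrow> nat)
   \<Rightarrow> ('r \<Rightarrow> 'a set \<Rightarrow> ('a \<Rightarrow> real) \<Rightarrow> real \<Rightarrow> 'a mech) \<Rightarrow> 'r \<Rightarrow> 'a set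
   \<Rightarrow> ('a \<Rightarrow> real) \<Rightarrow> 'a set" where
  "rs_alloc A B F sel rk addm w T b =
     (let t = opt_val (xos F) T b B / (8 * B);
          Sstar = tb_argmax rk (Pow (A - T)) (\<lambda>S. xos F S - t * sum b S);
          f = sel Sstar
      in fst (addm w Sstar f B b))"

definition rs_mech ::
  "'a set \<Rightarrow> real \<Rightarrow> ('a \<Rightarrow> real) set \<Rightarrow> ('a set \<Rightarrow> ('a \<Rightarrow> real)) \<Rightarrow> ('a set \<Rightarrow> nat)
   \<Rightarrow> ('r \<Rightarrow> 'a set \<Rightarrow> ('a \<Rightarrow> real) \<Rightarrow> real \<Rightarrow> 'a mech) \<Rightarrow> 'r \<Rightarrow> 'a set \<Rightarrow> 'a mech" where
  "rs_mech A B F sel rk addm w T = threshold_mech B (rs_alloc A B F sel rk addm w T)"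

definition best_single :: "'a set \<Rightarrow> ('a \<Rightarrow> real) set \<Rightarrow> 'a" where
  "best_single A F = (SOME i. i \<in> A \<and> (\<forall>j\<in>A. xos F {j} \<le> xos F {i}))"

definition single_mech :: "'a set \<Rightarrow> real \<Rightarrow> ('a \<Rightarrow> real) set \<Rightarrow> 'a mech" where
  "single_mech A B F b =
     ({best_single A F}, (\<lambda>i. if i = best_single A F then B else 0))"

text \<open>XOS-Main as a distribution over deterministic mechanisms: a fair coin chooses the branch;
  T is a uniformly random subset of A (each item independently with probability 1/2);
  w is the random seed of AddM, drawn from R.\<close>
definition xos_main ::
  "'a set \<Rightarrow> real \<Rightarrow> ('a \<Rightarrow> real) set \<Rightarrow> ('a set \<Rightarrow> ('a \<Rightarrow> real)) \<Rightarrow> ('a set \<Rightarrow> nat)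
   \<Rightarrow> ('r \<Rightarrow> 'a set \<Rightarrow> ('a \<Rightarrow> real) \<Rightarrow> real \<Rightarrow> 'a mech) \<Rightarrow> 'r pmf \<Rightarrow> 'a mech pmf" where
  "xos_main A B F sel rk addm R =
     map_pmf (\<lambda>(coin, T, w). if coin then rs_mech A B F sel rk addm w T else single_mech A B F)
       (pair_pmf (bernoulli_pmf (1/2)) (pair_pmf (pmf_of_set (Pow A)) R))"

definition addm_ok ::
  "'a set \<Rightarrow> real \<Rightarrow> ('r \<Rightarrow> 'a set \<Rightarrow> ('a \<Rightarrow> real) \<Rightarrow> real \<Rightarrow> 'a mech) \<Rightarrow> 'r pmf \<Rightarrow> bool" where
  "addm_ok A B addm R \<longleftrightarrow>
     (\<forall>S f. S \<subseteq> A \<longrightarrow> (\<forall>i\<in>S. 0 \<le> f i) \<longrightarrow>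
        (\<forall>w\<in>set_pmf R. is_mech S B (addm w S f B) \<and> truthful S B (addm w S f B)
                         \<and> budget_feasible S B (addm w S f B)) \<and>
        (\<forall>c. valid S B c \<longrightarrow>
           opt_val (\<lambda>X. sum f X) S c B
             \<le> 3 * measure_pmf.expectation R (\<lambda>w. sum f (fst (addm w S f B c)))))"

end

theory Submission
  imports Defs
begin

text \<open>The sample \<open>T\<close> ignores bids, and the bids of \<open>T\<close> fix the price \<open>t\<close>. For an
  item \<open>i \<in> S*\<close>, changing its bid by \<open>\<delta>\<close> moves the objective \<open>v(S) - t b(S)\<close> by the same
  amount \<open>-t\<delta>\<close> on every set containing \<open>i\<close>, so lowering the bid keeps \<open>S*\<close>, and any bid with which
  \<open>i\<close> still wins yields the same \<open>S*\<close>. Hence the allocation inherits monotonicity from AddM, and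
  the threshold payments are bounded by AddM's payments, which gives budget feasibility.

  Let \<open>X\<close> be optimal and \<open>f\<close> an additive function with \<open>f(X) = v(X) = OPT\<close>. If a
  single item is worth \<open>OPT/16\<close>, the second branch gives \<open>OPT/32\<close>. Otherwise every weight of \<open>f\<close>
  on \<open>X\<close> is below \<open>OPT/16\<close>, and Chebyshev's inequality shows that for at least \<open>3/4\<close> of the
  samples both \<open>f(X \<inter> T)\<close> and \<open>f(X - T)\<close> exceed \<open>OPT/4\<close>. For such \<open>T\<close> the price maximiser
  \<open>S*\<close> contains a budget-feasible set of \<open>f\<close>-value at least \<open>OPT/64\<close>: either \<open>S*\<close> itself, or a part
  \<open>W\<close> of cost between \<open>B/2\<close> and \<open>B\<close>, whose removal would otherwise improve the objective. AddM
  recovers a third of this, so the overall constant is \<open>512\<close>.\<close>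

lemma expectation_bind_pmf_bounded:
  fixes f :: "'b \<Rightarrow> real"
  assumes "\<And>y. \<bar>f y\<bar> \<le> K"
  shows "measure_pmf.expectation (bind_pmf M N) f
       = measure_pmf.expectation M (\<lambda>x. measure_pmf.expectation (N x) f)"
  using measurable_measure_pmf[of N] assms unfolding measure_pmf_bind
  by (intro integral_bind[where K="count_space UNIV" and B=K and B'=1])
     (auto intro: measure_pmf.finite_measure simp: measure_pmf.emeasure_space_1)

lemma expectation_pair_pmf:
  fixes H :: "'a \<times> 'b \<Rightarrow> real"
  assumes bound: "\<And>x y. x \<in> set_pmf p \<Longrightarrow> y \<in> set_pmf q \<Longrightarrow> \<bar>H (x, y)\<bar> \<le> K"
  shows "measure_pmf.expectation (pair_pmf p q) H
       = measure_pmf.expectation p (\<lambda>x. measure_pmf.expectation q (\<lambda>y. H (x, y)))"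
proof -
  define H' where "H' z = (if fst z \<in> set_pmf p \<and> snd z \<in> set_pmf q then H z else 0)" for z
  have H'_bound: "\<bar>H' z\<bar> \<le> \<bar>K\<bar>" for z
    using bound[of "fst z" "snd z"] by (auto simp: H'_def)
  have "measure_pmf.expectation (pair_pmf p q) H = measure_pmf.expectation (pair_pmf p q) H'"
    by (intro integral_cong_AE AE_pmfI) (auto simp: H'_def)
  also have "\<dots> = measure_pmf.expectation p
      (\<lambda>x. measure_pmf.expectation (bind_pmf q (\<lambda>y. return_pmf (x, y))) H')"
    unfolding pair_pmf_def by (rule expectation_bind_pmf_bounded[OF H'_bound])
  also have "\<dots> = measure_pmf.expectation p (\<lambda>x. measure_pmf.expectation q (\<lambda>y. H' (x, y)))"
    by (simp add: map_pmf_def[symmetric])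
  also have "\<dots> = measure_pmf.expectation p (\<lambda>x. measure_pmf.expectation q (\<lambda>y. H (x, y)))"
    by (intro integral_cong_AE AE_pmfI) (auto simp: H'_def intro!: integral_cong_AE AE_pmfI)
  finally show ?thesis .
qed

lemma integrable_measure_pmf_bounded:
  fixes g :: "'a \<Rightarrow> real"
  assumes "\<And>w. w \<in> set_pmf P \<Longrightarrow> \<bar>g w\<bar> \<le> K"
  shows "integrable (measure_pmf P) g"
  by (rule measure_pmf.integrable_const_bound[where B=K]) (use assms in \<open>auto intro: AE_pmfI\<close>)

lemma sum_le_xos: "finite F \<Longrightarrow> f \<in> F \<Longrightarrow> sum f X \<le> xos F X"
  unfolding xos_def by (rule Max_ge) auto

lemma xos_attained:
  assumes "finite F" "F \<noteq> {}"
  obtains f where "f \<in> F" "xos F X = sum f X"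
proof -
  have "Max ((\<lambda>f. sum f X) ` F) \<in> (\<lambda>f. sum f X) ` F" using assms by (intro Max_in) auto
  then show ?thesis using that unfolding xos_def by auto
qed

lemma xos_nonneg:
  assumes "xos_rep A F" "X \<subseteq> A"
  shows "0 \<le> xos F X"
proof -
  obtain f where f: "f \<in> F" "xos F X = sum f X"
    using assms(1) xos_attained unfolding xos_rep_def by blast
  then show ?thesis using assms by (auto simp: xos_rep_def intro!: sum_nonneg)
qed

lemma xos_mono:
  assumes rep: "xos_rep A F" and "finite A" "X \<subseteq> Y" "Y \<subseteq> A"
  shows "xos F X \<le> xos F Y"
proof -
  obtain f where f: "f \<in> F" "xos F X = sum f X"
    using rep xos_attained unfolding xos_rep_def by blast
  have "sum f X \<le> sum f Y"
    using rep f assms(2-4) by (intro sum_mono2) (auto simp: xos_rep_def dest: finite_subset)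
  also have "\<dots> \<le> xos F Y" using rep f by (intro sum_le_xos) (auto simp: xos_rep_def)
  finally show ?thesis using f by simp
qed

lemma opt_val_cong:
  assumes "\<And>j. j \<in> T \<Longrightarrow> b j = b' j"
  shows "opt_val v T b B = opt_val v T b' B"
proof -
  have "sum b X = sum b' X" if "X \<subseteq> T" for X using assms that by (intro sum.cong) auto
  then have "{X. X \<subseteq> T \<and> sum b X \<le> B} = {X. X \<subseteq> T \<and> sum b' X \<le> B}" by auto
  then show ?thesis unfolding opt_val_def by simp
qed

lemma opt_val_ge:
  assumes "finite T" "X \<subseteq> T" "sum b X \<le> B"
  shows "v X \<le> opt_val v T b B"
  unfolding opt_val_def using assms by (intro Max_ge) auto

lemma opt_val_attained:
  assumes "finite T" "0 \<le> B"
  obtains X where "X \<subseteq> T" "sum b X \<le> B" "opt_val v T b B = v X"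
proof -
  have "opt_val v T b B \<in> v ` {X. X \<subseteq> T \<and> sum b X \<le> B}"
    unfolding opt_val_def using assms by (intro Max_in) auto
  then show ?thesis using that by blast
qed

lemma opt_val_mono:
  assumes "finite A" "T \<subseteq> A" "0 \<le> B"
  shows "opt_val v T b B \<le> opt_val v A b B"
proof -
  obtain X where "X \<subseteq> T" "sum b X \<le> B" "opt_val v T b B = v X"
    using opt_val_attained[OF finite_subset[OF assms(2,1)] assms(3)] .
  then show ?thesis using assms opt_val_ge[of A X b B v] by auto
qed

section \<open>Maximisers with fixed tie-breaking\<close>

definition is_tb_argmax :: "('a set \<Rightarrow> nat) \<Rightarrow> 'a set set \<Rightarrow> ('a set \<Rightarrow> real) \<Rightarrow> 'a set \<Rightarrow> bool"
  where "is_tb_argmax rk D g S \<longleftrightarrow>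
    S \<in> D \<and> (\<forall>S'\<in>D. g S' \<le> g S) \<and> (\<forall>S'\<in>D. g S' = g S \<longrightarrow> rk S \<le> rk S')"

lemma is_tb_argmax_unique:
  assumes "inj_on rk D" "is_tb_argmax rk D g S" "is_tb_argmax rk D g S'"
  shows "S = S'"
proof -
  have "g S = g S'" using assms(2,3) unfolding is_tb_argmax_def by (meson order_antisym)
  then have "rk S = rk S'" using assms(2,3) unfolding is_tb_argmax_def by (metis order_antisym)
  then show "S = S'" using assms unfolding is_tb_argmax_def inj_on_def by blast
qed

lemma is_tb_argmax_exists:
  assumes "finite D" "D \<noteq> {}"
  obtains S where "is_tb_argmax rk D g S"
proof -
  define m where "m = Max (g ` D)"
  define M where "M = {S\<in>D. g S = m}"
  have "m \<in> g ` D" unfolding m_def using assms by (intro Max_in) auto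
  then have "M \<noteq> {}" unfolding M_def by auto
  moreover have "finite M" using assms unfolding M_def by auto
  ultimately have "Min (rk ` M) \<in> rk ` M" by (intro Min_in) auto
  then obtain S where S: "S \<in> M" "rk S = Min (rk ` M)" by auto
  have "is_tb_argmax rk D g S"
    using S \<open>finite M\<close> assms(1) unfolding is_tb_argmax_def M_def m_def by auto
  then show ?thesis using that by blast
qed

lemma tb_argmax_eqI:
  assumes "inj_on rk D" "is_tb_argmax rk D g S"
  shows "tb_argmax rk D g = S"
proof -
  have "tb_argmax rk D g = (THE S. is_tb_argmax rk D g S)"
    unfolding tb_argmax_def is_tb_argmax_def ..
  also have "\<dots> = S"
    using assms(2) by (rule the_equality) (rule is_tb_argmax_unique[OF assms(1) _ assms(2)])
  finally show ?thesis .
qed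

lemma is_tb_argmax_tb_argmax:
  assumes "finite D" "D \<noteq> {}" "inj_on rk D"
  shows "is_tb_argmax rk D g (tb_argmax rk D g)"
  using is_tb_argmax_exists[OF assms(1,2)] tb_argmax_eqI[OF assms(3)] by metis

lemma tb_argmax_cong:
  assumes "\<And>X. X \<in> D \<Longrightarrow> g X = g' X"
  shows "tb_argmax rk D g = tb_argmax rk D g'"
  unfolding tb_argmax_def using assms by (intro arg_cong[where f=The] ext) auto

lemma is_tb_argmax_raise:
  assumes max: "is_tb_argmax rk D g S" and "i \<in> S" "0 \<le> d"
    and g': "\<And>X. X \<in> D \<Longrightarrow> g' X = g X + (if i \<in> X then d else 0)"
  shows "is_tb_argmax rk D g' S"
proof -
  have S: "S \<in> D" "\<And>S'. S' \<in> D \<Longrightarrow> g S' \<le> g S"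
    "\<And>S'. S' \<in> D \<Longrightarrow> g S' = g S \<Longrightarrow> rk S \<le> rk S'"
    using max unfolding is_tb_argmax_def by auto
  then have g'S: "g' S = g S + d" using g' \<open>i \<in> S\<close> by simp
  have "g' S' \<le> g' S" if "S' \<in> D" for S'
    using S(2)[OF that] g'[OF that] g'S \<open>0 \<le> d\<close> by (cases "i \<in> S'") auto
  moreover have "rk S \<le> rk S'" if "S' \<in> D" "g' S' = g' S" for S'
  proof -
    have "g S' = g S"
      using S(2)[OF that(1)] g'[OF that(1)] g'S that(2) \<open>0 \<le> d\<close> by (cases "i \<in> S'") auto
    then show ?thesis using S(3) that(1) by blast
  qed
  ultimately show ?thesis using S(1) unfolding is_tb_argmax_def by blast
qed

lemma tb_argmax_raise:
  assumes D: "finite D" "D \<noteq> {}" "inj_on rk D"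
    and "i \<in> tb_argmax rk D g" "0 \<le> d"
    and "\<And>X. X \<in> D \<Longrightarrow> g' X = g X + (if i \<in> X then d else 0)"
  shows "tb_argmax rk D g' = tb_argmax rk D g"
  using assms by (intro tb_argmax_eqI is_tb_argmax_raise[OF is_tb_argmax_tb_argmax]) auto

text \<open>Whichever of the two objectives is larger on the sets containing \<open>i\<close> keeps the other's
  maximiser.\<close>
lemma tb_argmax_shift:
  assumes D: "finite D" "D \<noteq> {}" "inj_on rk D"
    and i: "i \<in> tb_argmax rk D g" "i \<in> tb_argmax rk D g'"
    and g': "\<And>X. X \<in> D \<Longrightarrow> g' X = g X + (if i \<in> X then d else 0)"
  shows "tb_argmax rk D g' = tb_argmax rk D g"
proof (cases "0 \<le> d")
  case True
  then show ?thesis using tb_argmax_raise[OF D i(1) _ g'] by blast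
next
  case False
  have "g X = g' X + (if i \<in> X then - d else 0)" if "X \<in> D" for X using g'[OF that] by simp
  then show ?thesis using tb_argmax_raise[OF D i(2), of "- d" g] False by simp
qed

section \<open>Truthful mechanisms and threshold payments\<close>

lemma valid_subset: "valid A B b \<Longrightarrow> S \<subseteq> A \<Longrightarrow> valid S B b"
  unfolding valid_def by auto

lemma valid_fun_upd: "valid A B b \<Longrightarrow> 0 \<le> x \<Longrightarrow> x \<le> B \<Longrightarrow> valid A B (b(i := x))"
  unfolding valid_def by auto

lemma sum_fun_upd:
  fixes b :: "'a \<Rightarrow> 'b::ab_group_add"
  assumes "finite X"
  shows "sum (b(i := x)) X = sum b X + (if i \<in> X then x - b i else 0)"
proof (cases "i \<in> X")
  case True
  have "sum (b(i := x)) (X - {i}) = sum b (X - {i})" by (intro sum.cong) auto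
  then show ?thesis using assms True by (simp add: sum.remove)
next
  case False
  then have "sum (b(i := x)) X = sum b X" by (intro sum.cong) auto
  with False show ?thesis by simp
qed

lemma is_mechD:
  assumes "is_mech S B M" "valid S B b"
  shows "fst (M b) \<subseteq> S" "\<And>i. i \<notin> fst (M b) \<Longrightarrow> snd (M b) i = 0"
    "\<And>i. i \<in> fst (M b) \<Longrightarrow> b i \<le> snd (M b) i"
  using assms unfolding is_mech_def by blast+

lemma is_mech_cong: "is_mech S B M \<Longrightarrow> (\<And>j. j \<in> S \<Longrightarrow> b j = b' j) \<Longrightarrow> M b = M b'"
  unfolding is_mech_def by blast

lemma truthful_winner_lower_bid:
  assumes M: "is_mech S B M" "truthful S B M" and b: "valid S B b" and "i \<in> S"
    and x: "0 \<le> x" "x \<le> b i" and win: "i \<in> fst (M b)"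
  shows "i \<in> fst (M (b(i := x)))"
proof (rule ccontr)
  assume lose: "i \<notin> fst (M (b(i := x)))"
  have "valid S B (b(i := x))" using b x \<open>i \<in> S\<close> by (auto simp: valid_def)
  then have "utility i x (M b) \<le> utility i x (M (b(i := x)))"
    using M(2) b \<open>i \<in> S\<close> unfolding truthful_def by (metis fun_upd_same fun_upd_upd)
  then have "snd (M b) i \<le> x" using lose win by (simp add: utility_def)
  moreover have "b i \<le> snd (M b) i" using is_mechD(3)[OF M(1) b win] .
  ultimately have "b(i := x) = b" using x by auto
  then show False using lose win by simp
qed

lemma truthful_payment_ge:
  assumes M: "is_mech S B M" "truthful S B M" and b: "valid S B b" and "i \<in> S"
    and x: "0 \<le> x" "x \<le> B" and win: "i \<in> fst (M b)" "i \<in> fst (M (b(i := x)))"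
  shows "x \<le> snd (M b) i"
proof -
  have b': "valid S B (b(i := x))" using b x \<open>i \<in> S\<close> by (auto simp: valid_def)
  then have "utility i (b i) (M (b(i := x))) \<le> utility i (b i) (M b)"
    using M(2) b \<open>i \<in> S\<close> unfolding truthful_def by (metis fun_upd_triv fun_upd_upd)
  then have "snd (M (b(i := x))) i \<le> snd (M b) i" using win by (simp add: utility_def)
  moreover have "x \<le> snd (M (b(i := x))) i" using is_mechD(3)[OF M(1) b' win(2)] by (metis fun_upd_same)
  ultimately show ?thesis by simp
qed

lemma threshold_fun_upd: "threshold B alloc (b(i := y)) i = threshold B alloc b i"
  unfolding threshold_def by simp

lemma threshold_ge:
  assumes "0 \<le> x" "x \<le> B" "i \<in> alloc (b(i := x))"
  shows "x \<le> threshold B alloc b i"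
  unfolding threshold_def using assms by (intro cSup_upper) (auto intro: bdd_aboveI[where M=B])

lemma threshold_le:
  assumes "0 \<le> x0" "x0 \<le> B" "i \<in> alloc (b(i := x0))"
    and "\<And>x. 0 \<le> x \<Longrightarrow> x \<le> B \<Longrightarrow> i \<in> alloc (b(i := x)) \<Longrightarrow> x \<le> z"
  shows "threshold B alloc b i \<le> z"
  unfolding threshold_def using assms by (intro cSup_least) auto

definition monotone_alloc :: "'a set \<Rightarrow> real \<Rightarrow> (('a \<Rightarrow> real) \<Rightarrow> 'a set) \<Rightarrow> bool" where
  "monotone_alloc A B alloc \<longleftrightarrow> (\<forall>b i x. valid A B b \<longrightarrow> i \<in> A \<longrightarrow> 0 \<le> x \<longrightarrow> x \<le> b i \<longrightarrow>
      i \<in> alloc b \<longrightarrow> i \<in> alloc (b(i := x)))"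

lemma monotone_allocD:
  "monotone_alloc A B alloc \<Longrightarrow> valid A B b \<Longrightarrow> i \<in> A \<Longrightarrow> 0 \<le> x \<Longrightarrow> x \<le> b i
    \<Longrightarrow> i \<in> alloc b \<Longrightarrow> i \<in> alloc (b(i := x))"
  unfolding monotone_alloc_def by blast

lemma truthful_threshold_mech:
  assumes mono: "monotone_alloc A B alloc"
  shows "truthful A B (threshold_mech B alloc)"
  unfolding truthful_def
proof (intro allI impI)
  fix c b i assume c: "valid A B c" and b: "valid A B b" and i: "i \<in> A"
  let ?th = "threshold B alloc b i"
  have ci: "0 \<le> c i" "c i \<le> B" and bi: "0 \<le> b i" "b i \<le> B"
    using b c i by (auto simp: valid_def)
  have "c i \<le> ?th" if "i \<in> alloc (b(i := c i))" using threshold_ge ci that by metis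
  moreover have "?th \<le> c i" if win: "i \<in> alloc b" and lose: "i \<notin> alloc (b(i := c i))"
  proof (rule threshold_le[of "b i"])
    fix x assume x: "0 \<le> x" "x \<le> B" "i \<in> alloc (b(i := x))"
    have "valid A B (b(i := x))" using valid_fun_upd[OF b x(1,2)] .
    show "x \<le> c i"
    proof (rule ccontr)
      assume "\<not> x \<le> c i"
      then have "i \<in> alloc ((b(i := x))(i := c i))"
        using monotone_allocD[OF mono \<open>valid A B (b(i := x))\<close> i ci(1)] x(3) by simp
      then show False using lose by simp
    qed
  qed (use bi win in auto)
  ultimately show "utility i (c i) (threshold_mech B alloc b)
      \<le> utility i (c i) (threshold_mech B alloc (b(i := c i)))"
    by (auto simp: utility_def threshold_mech_def threshold_fun_upd)
qed

lemma threshold_le_truthful_payment: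
  assumes M: "is_mech S B M" "truthful S B M" and b: "valid S B b" and "i \<in> S"
    and win: "i \<in> alloc b" "i \<in> fst (M b)"
    and follows: "\<And>x. 0 \<le> x \<Longrightarrow> x \<le> B \<Longrightarrow> i \<in> alloc (b(i := x)) \<Longrightarrow> i \<in> fst (M (b(i := x)))"
  shows "threshold B alloc b i \<le> snd (M b) i"
proof (rule threshold_le[of "b i"])
  show "0 \<le> b i" "b i \<le> B" using b \<open>i \<in> S\<close> by (auto simp: valid_def)
  show "i \<in> alloc (b(i := b i))" using win by simp
  fix x assume x: "0 \<le> x" "x \<le> B" "i \<in> alloc (b(i := x))"
  show "x \<le> snd (M b) i" by (rule truthful_payment_ge[OF M b \<open>i \<in> S\<close> x(1,2) win(2) follows[OF x]])
qed

lemma is_mech_threshold_mech: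
  assumes local: "\<And>b b'. (\<And>j. j \<in> A \<Longrightarrow> b j = b' j) \<Longrightarrow> alloc b = alloc b'"
    and sub: "\<And>b. valid A B b \<Longrightarrow> alloc b \<subseteq> A"
  shows "is_mech A B (threshold_mech B alloc)"
proof -
  have "threshold_mech B alloc b = threshold_mech B alloc b'" if "\<forall>j\<in>A. b j = b' j" for b b'
  proof -
    have "alloc (b(i := x)) = alloc (b'(i := x))" for i x using that by (intro local) simp
    then have "threshold B alloc b i = threshold B alloc b' i" for i unfolding threshold_def by simp
    moreover have "alloc b = alloc b'" using that by (intro local) simp
    ultimately show ?thesis unfolding threshold_mech_def by (simp cong: if_cong)
  qed
  moreover have "b i \<le> threshold B alloc b i" if "valid A B b" "i \<in> alloc b" for b i
    using sub that threshold_ge[of "b i" B i alloc b] by (auto simp: valid_def)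
  ultimately show ?thesis using sub unfolding is_mech_def threshold_mech_def by auto
qed

section \<open>Random samples of an additive weight\<close>

lemma exists_subset_sum_between:
  fixes c :: "'a \<Rightarrow> real"
  assumes "finite S" "0 \<le> B" "\<And>i. i \<in> S \<Longrightarrow> 0 \<le> c i \<and> c i \<le> B" "B < sum c S"
  obtains W where "W \<subseteq> S" "B / 2 \<le> sum c W" "sum c W \<le> B"
  using assms
proof (induction S arbitrary: thesis rule: finite_induct)
  case empty
  then show ?case by simp
next
  case (insert x S)
  consider "B < sum c S" | "B / 2 \<le> sum c S" "sum c S \<le> B" | "sum c S < B / 2" by linarith
  then show ?case
  proof cases
    case 1
    then show ?thesis using insert.IH[of thesis] insert.prems by auto
  next
    case 2
    then show ?thesis using insert.prems(1)[of S] by blast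
  next
    case 3
    then have "B / 2 \<le> sum c {x}" using insert.hyps insert.prems(4) by simp
    moreover have "sum c {x} \<le> B" using insert.prems(3) by simp
    ultimately show ?thesis using insert.prems(1)[of "{x}"] by blast
  qed
qed

lemma sum_Pow_square_deviation:
  fixes a :: "'a \<Rightarrow> real"
  assumes "finite A"
  shows "(\<Sum>T\<in>Pow A. (sum a T - sum a A / 2)^2) = 2 ^ card A / 4 * (\<Sum>i\<in>A. (a i)^2)"
  using assms
proof (induction A rule: finite_induct)
  case empty
  then show ?case by simp
next
  case (insert x A)
  let ?dev = "\<lambda>T. sum a T - sum a A / 2"
  let ?sq = "\<lambda>T. (sum a T - sum a (insert x A) / 2)^2"
  have inj: "inj_on (insert x) (Pow A)"
    unfolding inj_on_def by (metis PowD insert.hyps(2) insert_ident subsetD)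
  have sum_insert: "sum a (insert x T) = a x + sum a T" if "T \<in> Pow A" for T
    using insert.hyps that by (auto intro!: sum.insert dest: finite_subset)
  have "(\<Sum>T\<in>Pow (insert x A). ?sq T) = (\<Sum>T\<in>Pow A. ?sq T) + (\<Sum>T\<in>insert x ` Pow A. ?sq T)"
    unfolding Pow_insert using insert.hyps by (intro sum.union_disjoint) auto
  also have "(\<Sum>T\<in>insert x ` Pow A. ?sq T) = (\<Sum>T\<in>Pow A. (?dev T + a x / 2)^2)"
    unfolding sum.reindex[OF inj, unfolded comp_def] using insert.hyps
    by (intro sum.cong refl) (simp add: sum_insert power2_eq_square field_simps)
  also have "(\<Sum>T\<in>Pow A. ?sq T) = (\<Sum>T\<in>Pow A. (?dev T - a x / 2)^2)"
    using insert.hyps by (intro sum.cong refl) (simp add: power2_eq_square field_simps)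
  also have "(\<Sum>T\<in>Pow A. (?dev T - a x / 2)^2) + (\<Sum>T\<in>Pow A. (?dev T + a x / 2)^2)
      = (\<Sum>T\<in>Pow A. 2 * (?dev T)^2 + (a x)^2 / 2)"
    by (subst sum.distrib[symmetric]) (intro sum.cong, auto simp: power2_eq_square algebra_simps)
  also have "\<dots> = 2 ^ card (insert x A) / 4 * (\<Sum>i\<in>insert x A. (a i)^2)"
    using insert by (simp add: sum.distrib sum_distrib_left[symmetric] card_Pow algebra_simps)
  finally show ?case .
qed

lemma card_Pow_deviation_le:
  fixes a :: "'a \<Rightarrow> real" and d :: real
  assumes "finite A" "0 \<le> d"
  shows "real (card {T\<in>Pow A. d \<le> \<bar>sum a T - sum a A / 2\<bar>}) * d^2
       \<le> 2 ^ card A / 4 * (\<Sum>i\<in>A. (a i)^2)"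
proof -
  let ?far = "{T\<in>Pow A. d \<le> \<bar>sum a T - sum a A / 2\<bar>}"
  have "real (card ?far) * d^2 = (\<Sum>T\<in>?far. d^2)" by simp
  also have "\<dots> \<le> (\<Sum>T\<in>?far. (sum a T - sum a A / 2)^2)"
    using assms(2) by (intro sum_mono) (metis (mono_tags) mem_Collect_eq power2_abs power_mono)
  also have "\<dots> \<le> (\<Sum>T\<in>Pow A. (sum a T - sum a A / 2)^2)"
    using assms(1) by (intro sum_mono2) auto
  finally show ?thesis using sum_Pow_square_deviation[OF assms(1)] by simp
qed

lemma card_balanced_subsets:
  fixes a :: "'a \<Rightarrow> real"
  assumes "finite A" and a: "\<And>i. i \<in> A \<Longrightarrow> 0 \<le> a i \<and> a i \<le> sum a A / 16"
    and pos: "0 < sum a A"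
  shows "3 / 4 * 2 ^ card A \<le> real (card {T\<in>Pow A. \<bar>sum a T - sum a A / 2\<bar> < sum a A / 4})"
proof -
  let ?s = "sum a A"
  let ?far = "{T\<in>Pow A. ?s / 4 \<le> \<bar>sum a T - ?s / 2\<bar>}"
  have "(\<Sum>i\<in>A. (a i)^2) \<le> (\<Sum>i\<in>A. ?s / 16 * a i)"
    using a mult_right_mono[of "a _" "?s / 16" "a _"] by (intro sum_mono) (simp add: power2_eq_square)
  also have "\<dots> = ?s^2 / 16" by (simp only: sum_distrib_left[symmetric]) (simp add: power2_eq_square)
  finally have squares: "(\<Sum>i\<in>A. (a i)^2) \<le> ?s^2 / 16" .
  have "real (card ?far) * (?s / 4)^2 \<le> 2 ^ card A / 4 * (\<Sum>i\<in>A. (a i)^2)"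
    using pos by (intro card_Pow_deviation_le[OF assms(1)]) simp
  also have "\<dots> \<le> 2 ^ card A / 4 * (?s^2 / 16)" using squares by (intro mult_left_mono) simp_all
  finally have far: "real (card ?far) \<le> 2 ^ card A / 4"
    using pos by (simp add: power_divide field_simps)
  have "{T\<in>Pow A. \<bar>sum a T - ?s / 2\<bar> < ?s / 4} = Pow A - ?far" by auto
  moreover have "card (Pow A - ?far) = 2 ^ card A - card ?far"
    using assms(1) by (subst card_Diff_subset) (auto simp: card_Pow)
  moreover have "card ?far \<le> card (Pow A)" using assms(1) by (intro card_mono) auto
  ultimately show ?thesis using far assms(1) by (simp add: card_Pow of_nat_diff)
qed

lemma opt_val_additive_ge_price_maximizer:
  fixes v :: "'a set \<Rightarrow> real" and f c :: "'a \<Rightarrow> real"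
  assumes D: "finite D" "S \<subseteq> D"
    and max: "\<And>Y. Y \<subseteq> D \<Longrightarrow> v Y - t * sum c Y \<le> v S - t * sum c S"
    and f_le: "\<And>Y. Y \<subseteq> D \<Longrightarrow> sum f Y \<le> v Y" and f_eq: "sum f S = v S"
    and c: "\<And>i. i \<in> D \<Longrightarrow> 0 \<le> c i \<and> c i \<le> B" and "0 \<le> B" "0 \<le> t"
    and Y: "Y \<subseteq> D" "sum c Y \<le> B"
  shows "min (v Y - t * B) (t * B / 2) \<le> opt_val (\<lambda>X. sum f X) S c B"
proof -
  have finS: "finite S" using D by (rule finite_subset[rotated])
  show ?thesis
  proof (cases "sum c S \<le> B")
    case True
    have "v Y - t * B \<le> v Y - t * sum c Y" using Y(2) \<open>0 \<le> t\<close> by (simp add: mult_left_mono)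
    also have "\<dots> \<le> v S - t * sum c S" by (rule max[OF Y(1)])
    also have "\<dots> \<le> sum f S"
      using f_eq c D(2) \<open>0 \<le> t\<close> by (simp add: subset_eq sum_nonneg)
    also have "\<dots> \<le> opt_val (\<lambda>X. sum f X) S c B" using finS True by (intro opt_val_ge) auto
    finally show ?thesis by (rule min.coboundedI1)
  next
    case False
    obtain W where W: "W \<subseteq> S" "B / 2 \<le> sum c W" "sum c W \<le> B"
      using exists_subset_sum_between[OF finS \<open>0 \<le> B\<close>, of c] c D(2) False by auto
    have "v (S - W) - t * sum c (S - W) \<le> v S - t * sum c S" using D(2) by (intro max) auto
    moreover have "sum f S = sum f (S - W) + sum f W" "sum c S = sum c (S - W) + sum c W"
      using sum.subset_diff[OF W(1) finS] by auto
    moreover have "sum f (S - W) \<le> v (S - W)" using D(2) by (intro f_le) auto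
    ultimately have "t * sum c W \<le> sum f W" using f_eq by (simp add: algebra_simps)
    moreover have "t * B / 2 \<le> t * sum c W" using mult_left_mono[OF W(2) \<open>0 \<le> t\<close>] by simp
    moreover have "sum f W \<le> opt_val (\<lambda>X. sum f X) S c B" using opt_val_ge[OF finS W(1,3)] .
    ultimately show ?thesis by (simp add: min.coboundedI2)
  qed
qed

lemma xos_balanced_sample:
  assumes rep: "xos_rep A F" "finite A" and c: "\<And>i. i \<in> A \<Longrightarrow> 0 \<le> c i" and "0 \<le> B"
    and X: "X \<subseteq> A" "sum c X \<le> B" "opt_val (xos F) A c B = xos F X"
    and f: "f \<in> F" "xos F X = sum f X"
    and T: "T \<subseteq> A" and balanced: "\<bar>sum f (X \<inter> T) - xos F X / 2\<bar> < xos F X / 4"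
  shows "xos F X / 64 \<le> min (xos F (X - T) - opt_val (xos F) T c B / 8) (opt_val (xos F) T c B / 16)"
proof -
  have finT: "finite T" and finX: "finite X" using rep(2) T X(1) finite_subset by auto
  have f_le: "sum f Y \<le> xos F Y" for Y using rep(1) f(1) sum_le_xos by (auto simp: xos_rep_def)
  have "sum c (X \<inter> T) \<le> sum c X" using c X(1) finX by (intro sum_mono2) auto
  then have "xos F (X \<inter> T) \<le> opt_val (xos F) T c B" using finT X(2) by (intro opt_val_ge) auto
  then have sample: "xos F X / 4 < opt_val (xos F) T c B" using balanced f_le[of "X \<inter> T"] by linarith
  have "opt_val (xos F) T c B \<le> xos F X" using opt_val_mono[OF rep(2) T \<open>0 \<le> B\<close>, of "xos F" c] X(3) by simp
  moreover have "sum f X = sum f (X \<inter> T) + sum f (X - T)" using sum.Int_Diff[OF finX] .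
  then have "xos F X / 4 < xos F (X - T)" using balanced f(2) f_le[of "X - T"] by linarith
  ultimately show ?thesis using sample by simp
qed

section \<open>The mechanism XOS-Main\<close>

lemma best_single_max:
  assumes "finite A" "A \<noteq> {}"
  shows "best_single A F \<in> A" "\<And>j. j \<in> A \<Longrightarrow> xos F {j} \<le> xos F {best_single A F}"
proof -
  have "Max ((\<lambda>j. xos F {j}) ` A) \<in> (\<lambda>j. xos F {j}) ` A" using assms by (intro Max_in) auto
  then obtain m where "m \<in> A" "xos F {m} = Max ((\<lambda>j. xos F {j}) ` A)" by auto
  then have "m \<in> A \<and> (\<forall>j\<in>A. xos F {j} \<le> xos F {m})" using assms(1) by simp
  then have "best_single A F \<in> A \<and> (\<forall>j\<in>A. xos F {j} \<le> xos F {best_single A F})"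
    unfolding best_single_def by (rule someI)
  then show "best_single A F \<in> A" "\<And>j. j \<in> A \<Longrightarrow> xos F {j} \<le> xos F {best_single A F}" by auto
qed

lemma single_mech_ok:
  assumes "finite A" "A \<noteq> {}"
  shows "is_mech A B (single_mech A B F) \<and> truthful A B (single_mech A B F)
    \<and> budget_feasible A B (single_mech A B F)"
  using best_single_max(1)[OF assms, of F] assms(1)
  by (auto simp: is_mech_def truthful_def budget_feasible_def single_mech_def valid_def)

locale xos_main_setting =
  fixes A :: "'a set" and B :: real and F :: "('a \<Rightarrow> real) set"
    and sel :: "'a set \<Rightarrow> ('a \<Rightarrow> real)" and rk :: "'a set \<Rightarrow> nat"
    and addm :: "'r \<Rightarrow> 'a set \<Rightarrow> ('a \<Rightarrow> real) \<Rightarrow> real \<Rightarrow> 'a mech" and R :: "'r pmf"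
  assumes finite_A: "finite A" and A_nonempty: "A \<noteq> {}" and B_pos: "0 < B"
    and rep: "xos_rep A F" and sel: "\<And>S. S \<subseteq> A \<Longrightarrow> sel S \<in> F \<and> sum (sel S) S = xos F S"
    and rk_inj: "inj_on rk (Pow A)" and addm: "addm_ok A B addm R"
begin

lemma finite_F: "finite F" and F_nonneg: "\<And>f i. f \<in> F \<Longrightarrow> i \<in> A \<Longrightarrow> 0 \<le> f i"
  using rep unfolding xos_rep_def by auto

lemma sel_nonneg: "S \<subseteq> A \<Longrightarrow> i \<in> S \<Longrightarrow> 0 \<le> sel S i"
  using sel F_nonneg by blast

lemma addm_mech:
  assumes "S \<subseteq> A" "w \<in> set_pmf R"
  shows "is_mech S B (addm w S (sel S) B)" "truthful S B (addm w S (sel S) B)"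
    "budget_feasible S B (addm w S (sel S) B)"
  using addm assms sel_nonneg[OF assms(1)] unfolding addm_ok_def by blast+

lemma addm_approx:
  assumes "S \<subseteq> A" "valid S B c"
  shows "opt_val (\<lambda>X. sum (sel S) X) S c B
    \<le> 3 * measure_pmf.expectation R (\<lambda>w. sum (sel S) (fst (addm w S (sel S) B c)))"
  using addm assms sel_nonneg[OF assms(1)] unfolding addm_ok_def by blast

definition price :: "'a set \<Rightarrow> ('a \<Rightarrow> real) \<Rightarrow> real" where
  "price T b = opt_val (xos F) T b B / (8 * B)"

definition Sstar :: "'a set \<Rightarrow> ('a \<Rightarrow> real) \<Rightarrow> 'a set" where
  "Sstar T b = tb_argmax rk (Pow (A - T)) (\<lambda>S. xos F S - price T b * sum b S)"

lemma rs_alloc_eq: "rs_alloc A B F sel rk addm w T b = fst (addm w (Sstar T b) (sel (Sstar T b)) B b)"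
  by (simp add: rs_alloc_def Let_def Sstar_def price_def)

lemma Pow_diff_tb_argmax_domain:
  "finite (Pow (A - T))" "Pow (A - T) \<noteq> {}" "inj_on rk (Pow (A - T))"
  using finite_A inj_on_subset[OF rk_inj, of "Pow (A - T)"] by auto

lemma is_tb_argmax_Sstar:
  "is_tb_argmax rk (Pow (A - T)) (\<lambda>S. xos F S - price T b * sum b S) (Sstar T b)"
  unfolding Sstar_def using Pow_diff_tb_argmax_domain by (rule is_tb_argmax_tb_argmax)

lemma Sstar_subset: "Sstar T b \<subseteq> A - T"
  using is_tb_argmax_Sstar[of T b] by (simp add: is_tb_argmax_def)

lemma price_nonneg:
  assumes "T \<subseteq> A"
  shows "0 \<le> price T b"
proof -
  have "xos F {} \<le> opt_val (xos F) T b B"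
    using assms finite_A B_pos by (intro opt_val_ge) (auto dest: finite_subset)
  moreover have "0 \<le> xos F {}" using xos_nonneg[OF rep] by simp
  ultimately show ?thesis unfolding price_def using B_pos by simp
qed

lemma price_cong: "(\<And>j. j \<in> T \<Longrightarrow> b j = b' j) \<Longrightarrow> price T b = price T b'"
  unfolding price_def by (simp add: opt_val_cong[of T b b'])

lemma Sstar_objective_fun_upd:
  assumes "i \<notin> T" "X \<in> Pow (A - T)"
  shows "xos F X - price T (b(i := x)) * sum (b(i := x)) X
    = (xos F X - price T b * sum b X) + (if i \<in> X then price T b * (b i - x) else 0)"
proof -
  have "finite X" using assms(2) finite_A by (auto dest: finite_subset)
  moreover have "price T (b(i := x)) = price T b" using assms(1) by (intro price_cong) auto
  ultimately show ?thesis by (simp only: sum_fun_upd) (simp add: algebra_simps)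
qed

lemma Sstar_lower_bid:
  assumes "T \<subseteq> A" "i \<in> Sstar T b" "x \<le> b i"
  shows "Sstar T (b(i := x)) = Sstar T b"
proof -
  have "i \<notin> T" using Sstar_subset assms(2) by blast
  have "0 \<le> price T b * (b i - x)" using price_nonneg[OF assms(1)] assms(3) by simp
  from tb_argmax_raise[OF Pow_diff_tb_argmax_domain assms(2)[unfolded Sstar_def] this
      Sstar_objective_fun_upd[OF \<open>i \<notin> T\<close>]]
  show ?thesis unfolding Sstar_def .
qed

lemma Sstar_fun_upd_eq:
  assumes "i \<in> Sstar T b" "i \<in> Sstar T (b(i := x))"
  shows "Sstar T (b(i := x)) = Sstar T b"
proof -
  have "i \<notin> T" using Sstar_subset assms(1) by blast
  from tb_argmax_shift[OF Pow_diff_tb_argmax_domain assms[unfolded Sstar_def]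
      Sstar_objective_fun_upd[OF this]]
  show ?thesis unfolding Sstar_def .
qed

lemma rs_alloc_subset_Sstar:
  assumes "valid A B b" "w \<in> set_pmf R"
  shows "rs_alloc A B F sel rk addm w T b \<subseteq> Sstar T b"
proof -
  have "Sstar T b \<subseteq> A" using Sstar_subset by blast
  then show ?thesis
    unfolding rs_alloc_eq using is_mechD(1)[OF addm_mech(1) valid_subset] assms by blast
qed

lemma rs_alloc_cong:
  assumes "T \<subseteq> A" "w \<in> set_pmf R" and b: "\<And>j. j \<in> A \<Longrightarrow> b j = b' j"
  shows "rs_alloc A B F sel rk addm w T b = rs_alloc A B F sel rk addm w T b'"
proof -
  have "price T b = price T b'" using assms(1) b by (intro price_cong) auto
  then have S: "Sstar T b = Sstar T b'"
    unfolding Sstar_def by (intro tb_argmax_cong) (use b in \<open>auto intro!: sum.cong\<close>)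
  have "Sstar T b' \<subseteq> A" using Sstar_subset by blast
  then have "addm w (Sstar T b') (sel (Sstar T b')) B b = addm w (Sstar T b') (sel (Sstar T b')) B b'"
    using b by (intro is_mech_cong[OF addm_mech(1)[OF _ assms(2)]]) auto
  then show ?thesis unfolding rs_alloc_eq S by simp
qed

lemma monotone_rs_alloc:
  assumes T: "T \<subseteq> A" and w: "w \<in> set_pmf R"
  shows "monotone_alloc A B (rs_alloc A B F sel rk addm w T)"
  unfolding monotone_alloc_def
proof (intro allI impI)
  fix b i x
  assume b: "valid A B b" and "i \<in> A" and x: "0 \<le> x" "x \<le> b i"
    and win: "i \<in> rs_alloc A B F sel rk addm w T b"
  define S where "S = Sstar T b"
  have iS: "i \<in> S" and SA: "S \<subseteq> A"
    using rs_alloc_subset_Sstar[OF b w] win Sstar_subset unfolding S_def by blast+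
  have "i \<in> fst (addm w S (sel S) B (b(i := x)))"
    using truthful_winner_lower_bid[OF addm_mech(1,2)[OF SA w] valid_subset[OF b SA] iS x] win
    unfolding rs_alloc_eq S_def by blast
  moreover have "Sstar T (b(i := x)) = S" using Sstar_lower_bid[OF T, of i b x] iS x(2) unfolding S_def by blast
  ultimately show "i \<in> rs_alloc A B F sel rk addm w T (b(i := x))" unfolding rs_alloc_eq by simp
qed

lemma threshold_rs_alloc_le_payment:
  assumes w: "w \<in> set_pmf R" and b: "valid A B b" and win: "i \<in> rs_alloc A B F sel rk addm w T b"
  shows "threshold B (rs_alloc A B F sel rk addm w T) b i
    \<le> snd (addm w (Sstar T b) (sel (Sstar T b)) B b) i"
proof -
  define S where "S = Sstar T b"
  have iS: "i \<in> S" and SA: "S \<subseteq> A"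
    using rs_alloc_subset_Sstar[OF b w] win Sstar_subset unfolding S_def by blast+
  show ?thesis unfolding S_def[symmetric]
  proof (rule threshold_le_truthful_payment[where alloc="rs_alloc A B F sel rk addm w T",
        OF addm_mech(1,2)[OF SA w] valid_subset[OF b SA] iS win])
    show "i \<in> fst (addm w S (sel S) B b)" using win unfolding rs_alloc_eq S_def .
    fix x assume x: "0 \<le> x" "x \<le> B" "i \<in> rs_alloc A B F sel rk addm w T (b(i := x))"
    have "i \<in> Sstar T (b(i := x))" using rs_alloc_subset_Sstar[OF valid_fun_upd[OF b x(1,2)] w] x(3) by blast
    then have "Sstar T (b(i := x)) = S" using Sstar_fun_upd_eq iS unfolding S_def by blast
    then show "i \<in> fst (addm w S (sel S) B (b(i := x)))" using x(3) unfolding rs_alloc_eq by simp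
  qed
qed

lemma budget_feasible_rs_mech:
  assumes w: "w \<in> set_pmf R"
  shows "budget_feasible A B (rs_mech A B F sel rk addm w T)"
  unfolding budget_feasible_def
proof (intro allI impI)
  fix b assume b: "valid A B b"
  define S where "S = Sstar T b"
  define M where "M = addm w S (sel S) B"
  have SA: "S \<subseteq> A" using Sstar_subset S_def by blast
  have M: "is_mech S B M" "budget_feasible S B M" and bS: "valid S B b"
    using addm_mech[OF SA w] valid_subset[OF b SA] unfolding M_def by auto
  have W: "rs_alloc A B F sel rk addm w T b = fst (M b)" unfolding rs_alloc_eq M_def S_def ..
  have WS: "fst (M b) \<subseteq> S" using is_mechD(1)[OF M(1) bS] .
  have "sum (snd (rs_mech A B F sel rk addm w T b)) A
      = (\<Sum>i\<in>fst (M b). threshold B (rs_alloc A B F sel rk addm w T) b i)"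
    unfolding rs_mech_def threshold_mech_def W using WS SA finite_A
    by (simp add: sum.If_cases Int_absorb1 order_trans)
  also have "\<dots> \<le> (\<Sum>i\<in>fst (M b). snd (M b) i)"
    using threshold_rs_alloc_le_payment[OF w b] W unfolding M_def S_def by (intro sum_mono) simp
  also have "\<dots> = (\<Sum>i\<in>S. snd (M b) i)"
    using WS SA finite_A is_mechD(2)[OF M(1) bS]
    by (intro sum.mono_neutral_left) (auto dest: finite_subset)
  also have "\<dots> \<le> B" using M(2) bS unfolding budget_feasible_def by blast
  finally show "sum (snd (rs_mech A B F sel rk addm w T b)) A \<le> B" .
qed

lemma rs_mech_ok:
  assumes "T \<subseteq> A" "w \<in> set_pmf R"
  shows "is_mech A B (rs_mech A B F sel rk addm w T) \<and> truthful A B (rs_mech A B F sel rk addm w T)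
    \<and> budget_feasible A B (rs_mech A B F sel rk addm w T)"
proof (intro conjI)
  show "is_mech A B (rs_mech A B F sel rk addm w T)"
    unfolding rs_mech_def using rs_alloc_cong[OF assms] rs_alloc_subset_Sstar[OF _ assms(2)] Sstar_subset
    by (intro is_mech_threshold_mech) blast+
  show "truthful A B (rs_mech A B F sel rk addm w T)"
    unfolding rs_mech_def using monotone_rs_alloc[OF assms] by (rule truthful_threshold_mech)
  show "budget_feasible A B (rs_mech A B F sel rk addm w T)"
    using budget_feasible_rs_mech[OF assms(2)] .
qed

lemma set_pmf_xos_main:
  assumes "M \<in> set_pmf (xos_main A B F sel rk addm R)"
  obtains "M = single_mech A B F"
    | T w where "T \<subseteq> A" "w \<in> set_pmf R" "M = rs_mech A B F sel rk addm w T"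
proof -
  have "set_pmf (pmf_of_set (Pow A)) = Pow A" using finite_A by (intro set_pmf_of_set) auto
  then show ?thesis using assms that unfolding xos_main_def by (auto split: if_splits)
qed

lemma univ_truthful_bf_xos_main: "univ_truthful_bf A B (xos_main A B F sel rk addm R)"
  unfolding univ_truthful_bf_def
  using single_mech_ok[OF finite_A A_nonempty] rs_mech_ok
  by (metis set_pmf_xos_main)

lemma rs_winners_subset:
  assumes "valid A B c" "w \<in> set_pmf R"
  shows "fst (rs_mech A B F sel rk addm w T c) \<subseteq> Sstar T c"
  using rs_alloc_subset_Sstar[OF assms] unfolding rs_mech_def threshold_mech_def by simp

lemma xos_rs_winners_bounds:
  assumes "valid A B c" "w \<in> set_pmf R"
  shows "0 \<le> xos F (fst (rs_mech A B F sel rk addm w T c))"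
    "xos F (fst (rs_mech A B F sel rk addm w T c)) \<le> xos F A"
proof -
  have "fst (rs_mech A B F sel rk addm w T c) \<subseteq> A"
    using rs_winners_subset[OF assms] Sstar_subset by blast
  then show "0 \<le> xos F (fst (rs_mech A B F sel rk addm w T c))"
    "xos F (fst (rs_mech A B F sel rk addm w T c)) \<le> xos F A"
    using xos_nonneg[OF rep] xos_mono[OF rep finite_A] by auto
qed

lemma sample_value_ge:
  assumes c: "valid A B c" and T: "T \<subseteq> A" and X: "X \<subseteq> A" "sum c X \<le> B"
  shows "min (xos F (X - T) - opt_val (xos F) T c B / 8) (opt_val (xos F) T c B / 16)
     \<le> 3 * measure_pmf.expectation R (\<lambda>w. xos F (fst (rs_mech A B F sel rk addm w T c)))"
proof -
  define S where "S = Sstar T c"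
  define f where "f = sel S"
  have SAT: "S \<subseteq> A - T" using Sstar_subset S_def by blast
  then have f: "f \<in> F" "sum f S = xos F S" and f_nonneg: "\<And>i. i \<in> S \<Longrightarrow> 0 \<le> f i"
    using sel sel_nonneg unfolding f_def by blast+
  have cS: "valid S B c" using valid_subset[OF c] SAT by blast
  have max: "xos F Y - price T c * sum c Y \<le> xos F S - price T c * sum c S" if "Y \<subseteq> A - T" for Y
    using is_tb_argmax_Sstar[of T c] that unfolding is_tb_argmax_def S_def by blast
  have "sum c (X - T) \<le> B"
    using X c finite_A by (intro order_trans[OF sum_mono2 X(2)]) (auto simp: valid_def dest: finite_subset)
  have winners: "fst (rs_mech A B F sel rk addm w T c) = fst (addm w S f B c)" for w
    unfolding rs_mech_def threshold_mech_def rs_alloc_eq S_def f_def by simp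
  have "min (xos F (X - T) - opt_val (xos F) T c B / 8) (opt_val (xos F) T c B / 16)
      = min (xos F (X - T) - price T c * B) (price T c * B / 2)"
    using B_pos by (simp add: price_def)
  also have "\<dots> \<le> opt_val (\<lambda>Y. sum f Y) S c B"
    using finite_A SAT max f \<open>sum c (X - T) \<le> B\<close> X(1) c price_nonneg[OF T] B_pos
      sum_le_xos[OF finite_F f(1)]
    by (intro opt_val_additive_ge_price_maximizer[where D = "A - T"]) (auto simp: valid_def)
  also have "\<dots> \<le> 3 * measure_pmf.expectation R (\<lambda>w. sum f (fst (addm w S f B c)))"
    using addm_approx SAT cS unfolding f_def by blast
  also have "\<dots> \<le> 3 * measure_pmf.expectation R (\<lambda>w. xos F (fst (rs_mech A B F sel rk addm w T c)))"
  proof -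
    have W: "fst (addm w S f B c) \<subseteq> S" if "w \<in> set_pmf R" for w
      using rs_winners_subset[OF c that, of T] unfolding winners S_def .
    have "\<bar>sum f (fst (addm w S f B c))\<bar> \<le> sum f S" if "w \<in> set_pmf R" for w
    proof -
      have "finite S" using finite_A SAT by (auto dest: finite_subset)
      then have "sum f (fst (addm w S f B c)) \<le> sum f S" using W[OF that] f_nonneg by (intro sum_mono2) auto
      moreover have "0 \<le> sum f (fst (addm w S f B c))" using W[OF that] f_nonneg by (intro sum_nonneg) auto
      ultimately show ?thesis by simp
    qed
    moreover have "\<bar>xos F (fst (rs_mech A B F sel rk addm w T c))\<bar> \<le> xos F A" if "w \<in> set_pmf R" for w
      using xos_rs_winners_bounds[OF c that] by simp
    ultimately show ?thesis
      using sum_le_xos[OF finite_F f(1)] unfolding winners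
      by (intro mult_left_mono integral_mono_AE integrable_measure_pmf_bounded AE_pmfI) auto
  qed
  finally show ?thesis .
qed

lemma balanced_sample_value_ge:
  assumes c: "valid A B c" and X: "X \<subseteq> A" "sum c X \<le> B" "opt_val (xos F) A c B = xos F X"
    and f: "f \<in> F" "xos F X = sum f X" and T: "T \<subseteq> A"
    and balanced: "\<bar>sum f (X \<inter> T) - xos F X / 2\<bar> < xos F X / 4"
  shows "xos F X / 192 \<le> measure_pmf.expectation R (\<lambda>w. xos F (fst (rs_mech A B F sel rk addm w T c)))"
proof -
  have "xos F X / 64 \<le> min (xos F (X - T) - opt_val (xos F) T c B / 8) (opt_val (xos F) T c B / 16)"
    using c B_pos unfolding valid_def by (intro xos_balanced_sample[OF rep finite_A _ _ X f T balanced]) auto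
  then show ?thesis using sample_value_ge[OF c T X(1,2)] by linarith
qed

lemma expectation_xos_main:
  assumes c: "valid A B c"
  shows "measure_pmf.expectation (xos_main A B F sel rk addm R) (\<lambda>M. xos F (fst (M c)))
    = (\<Sum>T\<in>Pow A. measure_pmf.expectation R (\<lambda>w. xos F (fst (rs_mech A B F sel rk addm w T c))))
        / 2 ^ card A / 2
      + xos F {best_single A F} / 2"
proof -
  let ?U = "pmf_of_set (Pow A)"
  let ?rs = "\<lambda>T w. xos F (fst (rs_mech A B F sel rk addm w T c))"
  define v1 where "v1 = xos F {best_single A F}"
  define H where "H z = (if fst z then ?rs (fst (snd z)) (snd (snd z)) else v1)" for z
  have U: "set_pmf ?U = Pow A" "finite (Pow A)" "Pow A \<noteq> {}"
    using finite_A by (auto intro!: set_pmf_of_set)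
  have rs_bound: "\<bar>?rs T w\<bar> \<le> xos F A" if "w \<in> set_pmf R" for T w
    using xos_rs_winners_bounds[OF c that] by simp
  have H_bound: "\<bar>H (coin, y)\<bar> \<le> xos F A + \<bar>v1\<bar>" if "y \<in> set_pmf (pair_pmf ?U R)" for coin y
  proof -
    have "snd y \<in> set_pmf R" using that by auto
    then show ?thesis
      using rs_bound[of "snd y" "fst y"] abs_ge_zero[of v1] xos_nonneg[OF rep, of A]
      by (auto simp: H_def)
  qed
  have "measure_pmf.expectation (xos_main A B F sel rk addm R) (\<lambda>M. xos F (fst (M c)))
      = measure_pmf.expectation (pair_pmf (bernoulli_pmf (1/2)) (pair_pmf ?U R)) H"
    unfolding xos_main_def integral_map_pmf
    by (rule Bochner_Integration.integral_cong[OF refl]) (auto simp: H_def v1_def single_mech_def split: prod.split)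
  also have "\<dots> = measure_pmf.expectation (bernoulli_pmf (1/2))
      (\<lambda>coin. measure_pmf.expectation (pair_pmf ?U R) (\<lambda>y. H (coin, y)))"
    using H_bound by (rule expectation_pair_pmf)
  also have "\<dots> = measure_pmf.expectation (pair_pmf ?U R) (\<lambda>y. ?rs (fst y) (snd y)) / 2 + v1 / 2"
    by (simp add: H_def)
  also have "measure_pmf.expectation (pair_pmf ?U R) (\<lambda>y. ?rs (fst y) (snd y))
      = measure_pmf.expectation ?U (\<lambda>T. measure_pmf.expectation R (?rs T))"
    using rs_bound by (subst expectation_pair_pmf) auto
  also have "\<dots> = (\<Sum>T\<in>Pow A. measure_pmf.expectation R (?rs T)) / 2 ^ card A"
    using U finite_A by (simp add: integral_pmf_of_set card_Pow)
  finally show ?thesis unfolding v1_def .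
qed

lemma sum_sample_values_ge:
  assumes c: "valid A B c" and small: "xos F {best_single A F} < opt_val (xos F) A c B / 16"
  shows "2 ^ card A * opt_val (xos F) A c B / 256
    \<le> (\<Sum>T\<in>Pow A. measure_pmf.expectation R (\<lambda>w. xos F (fst (rs_mech A B F sel rk addm w T c))))"
proof -
  define OPT where "OPT = opt_val (xos F) A c B"
  define Q where "Q = (\<lambda>T. measure_pmf.expectation R (\<lambda>w. xos F (fst (rs_mech A B F sel rk addm w T c))))"
  obtain X where X: "X \<subseteq> A" "sum c X \<le> B" "OPT = xos F X"
    using opt_val_attained[OF finite_A] B_pos unfolding OPT_def by (metis less_imp_le)
  obtain f where f: "f \<in> F" "xos F X = sum f X" using xos_attained[OF finite_F] rep
    unfolding xos_rep_def by blast
  define a where "a i = (if i \<in> X then f i else 0)" for i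
  have sum_a: "sum a T = sum f (X \<inter> T)" if "T \<subseteq> A" for T
    using that finite_A by (simp add: a_def sum.inter_restrict[symmetric] Int_commute finite_subset)
  have "sum a A = OPT" using sum_a[of A] X(1,3) f(2) by (simp add: Int_absorb2)
  have a_small: "0 \<le> a i \<and> a i \<le> sum a A / 16" if "i \<in> A" for i
  proof -
    have "f i \<le> xos F {i}" using sum_le_xos[OF finite_F f(1), of "{i}"] by simp
    also have "\<dots> \<le> xos F {best_single A F}" using best_single_max(2)[OF finite_A A_nonempty] that .
    finally show ?thesis
      using small F_nonneg[OF f(1) that] \<open>sum a A = OPT\<close> xos_nonneg[OF rep] unfolding a_def OPT_def
      by auto
  qed
  have "0 \<le> xos F {best_single A F}" using best_single_max(1)[OF finite_A A_nonempty] xos_nonneg[OF rep] by blast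
  then have "0 < sum a A" using small \<open>sum a A = OPT\<close> unfolding OPT_def by linarith
  define G where "G = {T\<in>Pow A. \<bar>sum a T - sum a A / 2\<bar> < sum a A / 4}"
  have "OPT / 192 \<le> Q T" if "T \<in> G" for T
    using that balanced_sample_value_ge[OF c X(1,2) X(3)[unfolded OPT_def] f, of T] X(3) sum_a
      \<open>sum a A = OPT\<close>
    unfolding G_def Q_def by auto
  then have "real (card G) * (OPT / 192) \<le> sum Q G" using sum_mono[of G "\<lambda>_. OPT / 192" Q] by simp
  also have "\<dots> \<le> sum Q (Pow A)"
    using finite_A xos_rs_winners_bounds(1)[OF c] unfolding G_def Q_def
    by (intro sum_mono2 integral_nonneg_AE AE_pmfI) auto
  finally have "real (card G) * (OPT / 192) \<le> sum Q (Pow A)" .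
  moreover have "3 / 4 * 2 ^ card A \<le> real (card G)"
    unfolding G_def using card_balanced_subsets[OF finite_A a_small \<open>0 < sum a A\<close>] .
  then have "3 / 4 * 2 ^ card A * (OPT / 192) \<le> real (card G) * (OPT / 192)"
    using \<open>0 < sum a A\<close> \<open>sum a A = OPT\<close> by (intro mult_right_mono) auto
  moreover have "2 ^ card A * OPT / 256 = 3 / 4 * 2 ^ card A * (OPT / 192)" by simp
  ultimately have "2 ^ card A * OPT / 256 \<le> sum Q (Pow A)" by linarith
  then show ?thesis unfolding OPT_def Q_def .
qed

lemma xos_main_approx:
  assumes c: "valid A B c"
  shows "opt_val (xos F) A c B
    \<le> 512 * measure_pmf.expectation (xos_main A B F sel rk addm R) (\<lambda>M. xos F (fst (M c)))"
proof -
  let ?OPT = "opt_val (xos F) A c B"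
  let ?single = "xos F {best_single A F}"
  let ?samples = "\<Sum>T\<in>Pow A. measure_pmf.expectation R (\<lambda>w. xos F (fst (rs_mech A B F sel rk addm w T c)))"
  define avg where "avg = ?samples / 2 ^ card A"
  have E: "measure_pmf.expectation (xos_main A B F sel rk addm R) (\<lambda>M. xos F (fst (M c)))
      = avg / 2 + ?single / 2"
    using expectation_xos_main[OF c] unfolding avg_def .
  have nonneg: "0 \<le> ?single" "0 \<le> avg"
    using best_single_max(1)[OF finite_A A_nonempty] xos_nonneg[OF rep] xos_rs_winners_bounds(1)[OF c]
    unfolding avg_def by (auto intro!: divide_nonneg_nonneg sum_nonneg integral_nonneg_AE AE_pmfI)
  consider "?OPT \<le> 16 * ?single" | "?OPT / 256 \<le> avg"
  proof (cases "?single < ?OPT / 16")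
    case True
    have "?OPT / 256 * 2 ^ card A \<le> ?samples" using sum_sample_values_ge[OF c True] by (simp add: mult.commute)
    then show ?thesis using that(2) unfolding avg_def by (simp add: pos_le_divide_eq)
  next
    case False
    then show ?thesis by (intro that(1)) linarith
  qed
  then show ?thesis unfolding E using nonneg by cases (simp_all add: field_simps)
qed

end

theorem theorem3p1:
  shows "\<exists>C::real. \<forall>(A::'a set) (B::real) (F::('a \<Rightarrow> real) set)
            (sel::'a set \<Rightarrow> ('a \<Rightarrow> real)) (rk::'a set \<Rightarrow> nat)
            (addm::'r \<Rightarrow> 'a set \<Rightarrow> ('a \<Rightarrow> real) \<Rightarrow> real \<Rightarrow> 'a mech) (R::'r pmf).
     finite A \<longrightarrow> A \<noteq> {} \<longrightarrow> 0 < B \<longrightarrow> xos_rep A F \<longrightarrow>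
     (\<forall>S\<subseteq>A. sel S \<in> F \<and> sum (sel S) S = xos F S) \<longrightarrow>
     inj_on rk (Pow A) \<longrightarrow> addm_ok A B addm R \<longrightarrow>
       univ_truthful_bf A B (xos_main A B F sel rk addm R) \<and>
       (\<forall>c. valid A B c \<longrightarrow>
          opt_val (xos F) A c B
            \<le> C * measure_pmf.expectation (xos_main A B F sel rk addm R)
                    (\<lambda>M. xos F (fst (M c))))"
proof (intro exI[of _ 512] allI impI)
  fix A :: "'a set" and B :: real and F :: "('a \<Rightarrow> real) set"
    and sel :: "'a set \<Rightarrow> ('a \<Rightarrow> real)" and rk :: "'a set \<Rightarrow> nat"
    and addm :: "'r \<Rightarrow> 'a set \<Rightarrow> ('a \<Rightarrow> real) \<Rightarrow> real \<Rightarrow> 'a mech" and R :: "'r pmf"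
  assume "finite A" "A \<noteq> {}" "0 < B" "xos_rep A F" "\<forall>S\<subseteq>A. sel S \<in> F \<and> sum (sel S) S = xos F S"
    "inj_on rk (Pow A)" "addm_ok A B addm R"
  then interpret xos_main_setting A B F sel rk addm R
    by unfold_locales blast+
  show "univ_truthful_bf A B (xos_main A B F sel rk addm R) \<and>
      (\<forall>c. valid A B c \<longrightarrow> opt_val (xos F) A c B
         \<le> 512 * measure_pmf.expectation (xos_main A B F sel rk addm R) (\<lambda>M. xos F (fst (M c))))"
    using univ_truthful_bf_xos_main xos_main_approx by blast
qed

end
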